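(* Let $\mathbf{k}$ be a field, $\Gamma$ a $(d-1)$-dimensional simplicial complex with $n$ vertices, and $F$ a face of $\Gamma$ such that $\mathrm{lk}_\Gamma(F)$ has dimension $d'$ and $n'$ vertices. Then for every $1\le i\le n'-d'$ for which $M_i(\mathrm{lk}_\Gamma(F))$ is defined, $M_i(\mathrm{lk}_\Gamma(F))\le M_i(\Gamma)$.
   Context: A simplicial complex is a family of subsets of its vertex set closed under subsets containing all singletons. $\mathrm{lk}_\Gamma(F)=\{G\setminus F:F\subseteq G\in\Gamma\}$, regarded as a complex on its own vertex set. For a complex $\Delta$ with vertex set $V$, $M_i(\Delta)=\max\{|W|:W\subseteq V,\ \tilde H_{|W|-i-1}(\Delta[W];\mathbf{k})\ne0\}$ (the maximal degree shift of the $i$-th module in the minimal free resolution of the Stanley–Reisner ring), defined when this set is nonempty; $\Delta[W]$ is the induced subcomplex. *)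

theory Defs
  imports Main
begin

(* Its vertex set is the union of its faces,
   so it automatically contains all singletons of its vertex set. *)
definition simplicial_complex :: "'a set set \<Rightarrow> bool" where
  "simplicial_complex \<Delta> \<longleftrightarrow> finite \<Delta> \<and> {} \<in> \<Delta> \<and> (\<forall>G\<in>\<Delta>. \<forall>H. H \<subseteq> G \<longrightarrow> H \<in> \<Delta>)"

definition vertices :: "'a set set \<Rightarrow> 'a set" where
  "vertices \<Delta> = \<Union>\<Delta>"

definition dim :: "'a set set \<Rightarrow> int" where
  "dim \<Delta> = Max ((\<lambda>G. int (card G) - 1) ` \<Delta>)"

definition link :: "'a set set \<Rightarrow> 'a set \<Rightarrow> 'a set set" where
  "link \<Gamma> F = {G - F | G. F \<subseteq> G \<and> G \<in> \<Gamma>}"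

definition induced :: "'a set set \<Rightarrow> 'a set \<Rightarrow> 'a set set" where
  "induced \<Delta> W = {G \<in> \<Delta>. G \<subseteq> W}"

(* Reduced simplicial chains over the field 'k: a j-chain assigns coefficients to the
   faces with j+1 elements (the empty face lives in degree -1).  Orientation is taken
   with respect to the linear order on vertices. *)
definition chain :: "'a set set \<Rightarrow> int \<Rightarrow> ('a set \<Rightarrow> 'k::field) \<Rightarrow> bool" where
  "chain \<Delta> j c \<longleftrightarrow> (\<forall>G. c G \<noteq> 0 \<longrightarrow> G \<in> \<Delta> \<and> int (card G) = j + 1)"

(* boundary: d[v_0<...<v_j] = sum_k (-1)^k [v_0..^v_k..v_j] *)
definition bd :: "'a::linorder set set \<Rightarrow> ('a set \<Rightarrow> 'k::field) \<Rightarrow> ('a set \<Rightarrow> 'k)" where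
  "bd \<Delta> c = (\<lambda>G. \<Sum>v\<in>{v \<in> vertices \<Delta>. v \<notin> G \<and> insert v G \<in> \<Delta>}.
       (-1) ^ card {u \<in> G. u < v} * c (insert v G))"

definition red_hom_nonzero :: "'k::field itself \<Rightarrow> 'a::linorder set set \<Rightarrow> int \<Rightarrow> bool" where
  "red_hom_nonzero _ \<Delta> j \<longleftrightarrow>
     (\<exists>c :: 'a set \<Rightarrow> 'k. chain \<Delta> j c \<and> bd \<Delta> c = (\<lambda>_. 0) \<and>
        \<not> (\<exists>b :: 'a set \<Rightarrow> 'k. chain \<Delta> (j + 1) b \<and> bd \<Delta> b = c))"

definition Mset :: "'k::field itself \<Rightarrow> 'a::linorder set set \<Rightarrow> nat \<Rightarrow> nat set" where
  "Mset K \<Delta> i = {card W | W. W \<subseteq> vertices \<Delta> \<and>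
                    red_hom_nonzero K (induced \<Delta> W) (int (card W) - int i - 1)}"

definition M :: "'k::field itself \<Rightarrow> 'a::linorder set set \<Rightarrow> nat \<Rightarrow> nat" where
  "M K \<Delta> i = Max (Mset K \<Delta> i)"

end

theory Submission
  imports Defs
begin

text \<open>For a vertex x, the short exact sequence relating the deletion of x, the complex and
  the link of x gives: if \<open>H~_j(lk x) \<noteq> 0\<close> then \<open>H~_j(\<Delta> \ x) \<noteq> 0\<close> or \<open>H~_(j+1)(\<Delta>) \<noteq> 0\<close>.
  Concretely, a cycle z of the link that bounds some b in the deletion yields the cycle
  \<open>x * z - b\<close> of \<Delta>, which cannot bound since contracting x would make z bound in the link.
  Applied to the induced subcomplexes on W and on \<open>W \<union> {x}\<close> this keeps the degree
  \<open>|W| - i - 1\<close> in step with the size of the vertex set, so every witness for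
  \<open>M_i(lk x)\<close> is dominated by one for \<open>M_i(\<Delta>)\<close>.  The general case follows by induction on F,
  since \<open>lk_\<Gamma>(F \<union> {x}) = lk_{lk_\<Gamma>(F)}(x)\<close>.\<close>

definition down_closed :: "'a set set \<Rightarrow> bool" where
  "down_closed \<Delta> \<longleftrightarrow> (\<forall>G\<in>\<Delta>. \<forall>H. H \<subseteq> G \<longrightarrow> H \<in> \<Delta>)"

lemma finite_face:
  assumes "finite \<Delta>" "down_closed \<Delta>" "G \<in> \<Delta>"
  shows "finite G"
proof -
  have "Pow G \<subseteq> \<Delta>" using assms(2,3) by (auto simp: down_closed_def)
  then show ?thesis using assms(1) finite_subset by (metis finite_Pow_iff)
qed

lemma finite_vertices:
  assumes "finite \<Delta>" "down_closed \<Delta>"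
  shows "finite (vertices \<Delta>)"
  using finite_face[OF assms] assms(1) by (auto simp: vertices_def)

lemma down_closed_induced: "down_closed \<Delta> \<Longrightarrow> down_closed (induced \<Delta> W)"
  by (auto simp: down_closed_def induced_def)

lemma link_singleton: "link \<Delta> {x} = {H. x \<notin> H \<and> insert x H \<in> \<Delta>}"
proof (rule set_eqI, rule iffI)
  fix H assume "H \<in> link \<Delta> {x}"
  then obtain G where "H = G - {x}" "x \<in> G" "G \<in> \<Delta>" by (auto simp: link_def)
  then show "H \<in> {H. x \<notin> H \<and> insert x H \<in> \<Delta>}" by (simp add: insert_absorb)
next
  fix H assume "H \<in> {H. x \<notin> H \<and> insert x H \<in> \<Delta>}"
  then have "H = insert x H - {x}" "{x} \<subseteq> insert x H" "insert x H \<in> \<Delta>" by auto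
  then show "H \<in> link \<Delta> {x}" unfolding link_def by blast
qed

lemma link_empty: "link \<Delta> {} = \<Delta>"
  unfolding link_def by force

lemma link_insert:
  assumes "x \<notin> F"
  shows "link \<Delta> (insert x F) = link (link \<Delta> F) {x}"
proof (rule set_eqI, rule iffI)
  fix H assume "H \<in> link \<Delta> (insert x F)"
  then obtain G where G: "H = G - insert x F" "insert x F \<subseteq> G" "G \<in> \<Delta>"
    by (auto simp: link_def)
  then have "G - F \<in> link \<Delta> F" unfolding link_def by blast
  moreover have "H = (G - F) - {x}" "{x} \<subseteq> G - F" using G assms by auto
  ultimately show "H \<in> link (link \<Delta> F) {x}" unfolding link_def by blast
next
  fix H assume "H \<in> link (link \<Delta> F) {x}"
  then obtain H' where "H = H' - {x}" "x \<in> H'" "H' \<in> link \<Delta> F" by (auto simp: link_def)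
  then obtain G where "H = G - insert x F" "insert x F \<subseteq> G" "G \<in> \<Delta>"
    by (auto simp: link_def)
  then show "H \<in> link \<Delta> (insert x F)" unfolding link_def by blast
qed

lemma finite_link: "finite \<Delta> \<Longrightarrow> finite (link \<Delta> F)"
proof -
  assume "finite \<Delta>"
  moreover have "link \<Delta> F \<subseteq> (\<lambda>G. G - F) ` \<Delta>" by (auto simp: link_def)
  ultimately show ?thesis using finite_subset by blast
qed

lemma down_closed_link:
  assumes "down_closed \<Delta>"
  shows "down_closed (link \<Delta> F)"
  unfolding down_closed_def
proof (intro ballI allI impI)
  fix G H assume "G \<in> link \<Delta> F" and HG: "H \<subseteq> G"
  then obtain G' where G': "G = G' - F" "F \<subseteq> G'" "G' \<in> \<Delta>" by (auto simp: link_def)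
  then have "H \<union> F \<in> \<Delta>"
    using assms HG unfolding down_closed_def by (meson Diff_subset Un_least order_trans)
  moreover have "H = (H \<union> F) - F" using HG G' by auto
  ultimately show "H \<in> link \<Delta> F" unfolding link_def by blast
qed

lemma link_subset_deletion:
  assumes "down_closed \<Delta>"
  shows "link \<Delta> {x} \<subseteq> induced \<Delta> (- {x})"
  using assms by (auto simp: link_singleton induced_def down_closed_def)

lemma induced_link_singleton:
  assumes "x \<notin> W"
  shows "induced (link \<Delta> {x}) W = link (induced \<Delta> (insert x W)) {x}"
  using assms by (auto simp: induced_def link_singleton)

lemma induced_deletion:
  assumes "x \<notin> W"
  shows "induced (induced \<Delta> (insert x W)) (- {x}) = induced \<Delta> W"
  using assms by (auto simp: induced_def)

definition vertex_sign :: "'a::linorder \<Rightarrow> 'a set \<Rightarrow> 'k::field" where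
  "vertex_sign x H = (-1) ^ card {u \<in> H. u < x}"

text \<open>The coefficient of the face \<open>x * H\<close>, read as a chain of the link of x.\<close>
definition contract :: "'a::linorder \<Rightarrow> ('a set \<Rightarrow> 'k::field) \<Rightarrow> 'a set \<Rightarrow> 'k" where
  "contract x e = (\<lambda>H. if x \<notin> H then vertex_sign x H * e (insert x H) else 0)"

lemma vertex_sign_nonzero: "(vertex_sign x H :: 'k::field) \<noteq> 0"
  by (simp add: vertex_sign_def)

lemma vertex_sign_square: "(vertex_sign x H :: 'k::field) * vertex_sign x H = 1"
  by (simp add: vertex_sign_def power_mult_distrib[symmetric])

lemma card_less_insert:
  assumes "finite H" "x \<notin> H"
  shows "card {u \<in> insert x H. u < v} = card {u \<in> H. u < v} + (if x < v then 1 else 0)"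
proof (cases "x < v")
  case True
  then have "{u \<in> insert x H. u < v} = insert x {u \<in> H. u < v}" by auto
  then show ?thesis using assms True by simp
next
  case False
  then have "{u \<in> insert x H. u < v} = {u \<in> H. u < v}" by auto
  then show ?thesis using False by simp
qed

lemma vertex_sign_swap:
  assumes "finite H" "x \<notin> H" "v \<notin> H" "v \<noteq> x"
  shows "(vertex_sign x H :: 'k::field) * vertex_sign v (insert x H)
         = - (vertex_sign v H * vertex_sign x (insert v H))"
proof -
  have "card {u \<in> insert x H. u < v} = card {u \<in> H. u < v} + (if x < v then 1 else 0)"
       "card {u \<in> insert v H. u < x} = card {u \<in> H. u < x} + (if v < x then 1 else 0)"
    using card_less_insert assms by blast+
  then show ?thesis using assms(4) unfolding vertex_sign_def
    by (cases "x < v") (auto simp: power_add algebra_simps)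
qed

lemma contract_bd:
  fixes \<Delta> :: "'a::linorder set set" and e :: "'a set \<Rightarrow> 'k::field"
  assumes fin: "\<forall>G\<in>\<Delta>. finite G" and xH: "x \<notin> H"
  shows "contract x (bd \<Delta> e) H = - bd (link \<Delta> {x}) (contract x e) H"
proof -
  let ?L = "link \<Delta> {x}"
  let ?A = "{v \<in> vertices \<Delta>. v \<notin> insert x H \<and> insert v (insert x H) \<in> \<Delta>}"
  let ?B = "{v \<in> vertices ?L. v \<notin> H \<and> insert v H \<in> ?L}"
  have AB: "?A = ?B"
    using xH by (auto simp: vertices_def link_singleton insert_commute)
  have "contract x (bd \<Delta> e) H
      = (\<Sum>v\<in>?A. vertex_sign x H * (vertex_sign v (insert x H) * e (insert v (insert x H))))"
    using xH by (simp add: contract_def bd_def vertex_sign_def sum_distrib_left)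
  also have "\<dots> = (\<Sum>v\<in>?B. - (vertex_sign v H * contract x e (insert v H)))"
  proof (rule sum.cong[OF AB])
    fix v assume "v \<in> ?B"
    then have v: "v \<notin> H" "v \<noteq> x" "insert x (insert v H) \<in> \<Delta>"
      by (auto simp: link_singleton)
    then have "finite H" using fin by (meson finite_insert)
    have "contract x e (insert v H) = vertex_sign x (insert v H) * e (insert v (insert x H))"
      using xH v by (simp add: contract_def insert_commute)
    then show "vertex_sign x H * (vertex_sign v (insert x H) * e (insert v (insert x H)))
        = - (vertex_sign v H * contract x e (insert v H))"
      using vertex_sign_swap[OF \<open>finite H\<close> xH v(1,2), where 'k = 'k]
      by (simp add: mult.assoc[symmetric])
  qed
  also have "\<dots> = - bd ?L (contract x e) H"
    by (simp add: bd_def vertex_sign_def sum_negf)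
  finally show ?thesis .
qed

lemma bd_link_contract:
  fixes \<Delta> :: "'a::linorder set set" and e :: "'a set \<Rightarrow> 'k::field"
  assumes "\<forall>G\<in>\<Delta>. finite G"
  shows "bd (link \<Delta> {x}) (\<lambda>H. - contract x e H) = contract x (bd \<Delta> e)"
proof
  fix H show "bd (link \<Delta> {x}) (\<lambda>H. - contract x e H) H = contract x (bd \<Delta> e) H"
  proof (cases "x \<in> H")
    case True
    then have "{v \<in> vertices (link \<Delta> {x}). v \<notin> H \<and> insert v H \<in> link \<Delta> {x}} = {}"
      by (auto simp: link_singleton)
    then show ?thesis using True by (simp add: bd_def contract_def)
  next
    case False
    have "bd (link \<Delta> {x}) (\<lambda>H. - contract x e H) H = - bd (link \<Delta> {x}) (contract x e) H"
      by (simp add: bd_def sum_negf)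
    then show ?thesis using contract_bd[OF assms False, of e] by simp
  qed
qed

lemma chain_contract:
  fixes e :: "'a::linorder set \<Rightarrow> 'k::field"
  assumes "\<forall>G\<in>\<Delta>. finite G" "chain \<Delta> (j + 1) e"
  shows "chain (link \<Delta> {x}) j (\<lambda>H. - contract x e H)"
  unfolding chain_def
proof (intro allI impI)
  fix H assume "- contract x e H \<noteq> 0"
  then have xH: "x \<notin> H" and "e (insert x H) \<noteq> 0" by (auto simp: contract_def split: if_splits)
  then have "insert x H \<in> \<Delta>" "int (card (insert x H)) = j + 1 + 1"
    using assms(2) by (auto simp: chain_def)
  moreover from this have "finite H" using assms(1) by auto
  ultimately show "H \<in> link \<Delta> {x} \<and> int (card H) = j + 1" using xH by (simp add: link_singleton)
qed

lemma bd_subcomplex: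
  assumes "chain L j z" "L \<subseteq> D" "finite (vertices D)"
  shows "bd D z = bd L z"
proof
  fix G
  let ?SD = "{v \<in> vertices D. v \<notin> G \<and> insert v G \<in> D}"
  let ?SL = "{v \<in> vertices L. v \<notin> G \<and> insert v G \<in> L}"
  have "finite ?SD" using assms(3) by simp
  moreover have "?SL \<subseteq> ?SD" using assms(2) by (auto simp: vertices_def)
  moreover have "\<forall>v\<in>?SD - ?SL. (-1) ^ card {u \<in> G. u < v} * z (insert v G) = 0"
    using assms(1) by (auto simp: chain_def vertices_def)
  ultimately show "bd D z G = bd L z G" unfolding bd_def by (rule sum.mono_neutral_right)
qed

lemma bd_split_vertex:
  fixes c :: "'a::linorder set \<Rightarrow> 'k::field"
  assumes "finite (vertices \<Delta>)" "x \<notin> G"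
  shows "bd \<Delta> c G = (if insert x G \<in> \<Delta> then vertex_sign x G * c (insert x G) else 0)
                     + bd (induced \<Delta> (- {x})) c G"
proof -
  let ?S = "{v \<in> vertices \<Delta>. v \<notin> G \<and> insert v G \<in> \<Delta>}"
  let ?f = "\<lambda>v. (-1) ^ card {u \<in> G. u < v} * c (insert v G)"
  have rest: "bd (induced \<Delta> (- {x})) c G = sum ?f (?S - {x})"
  proof -
    have "{v \<in> vertices (induced \<Delta> (- {x})). v \<notin> G \<and> insert v G \<in> induced \<Delta> (- {x})}
        = ?S - {x}"
      using assms(2) by (auto simp: induced_def vertices_def)
    then show ?thesis by (simp add: bd_def)
  qed
  show ?thesis
  proof (cases "insert x G \<in> \<Delta>")
    case True
    then have "x \<in> ?S" using assms(2) by (auto simp: vertices_def)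
    then have "bd \<Delta> c G = ?f x + sum ?f (?S - {x})"
      unfolding bd_def using sum.remove assms(1) by (metis (no_types, lifting) finite_subset mem_Collect_eq subsetI)
    then show ?thesis using True rest by (simp add: vertex_sign_def)
  next
    case False
    then have "?S - {x} = ?S" by auto
    then show ?thesis using False rest by (simp add: bd_def)
  qed
qed

lemma red_hom_nonzero_nonempty:
  fixes K :: "'k::field itself" and X :: "'a::linorder set set"
  assumes "red_hom_nonzero K X j"
  shows "X \<noteq> {}"
proof
  assume X: "X = {}"
  obtain c :: "'a set \<Rightarrow> 'k" where "chain X j c"
    and no_bd: "\<not> (\<exists>b. chain X (j + 1) b \<and> bd X b = c)"
    using assms unfolding red_hom_nonzero_def by blast
  then have "c = (\<lambda>_. 0)" using X by (auto simp: chain_def)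
  then have "chain X (j + 1) (\<lambda>_. 0) \<and> bd X (\<lambda>_. 0) = c" by (simp add: chain_def bd_def)
  then show False using no_bd by blast
qed

subsection \<open>The connecting map for a vertex link\<close>

lemma cone_cycle:
  fixes \<Delta> :: "'a::linorder set set" and z b :: "'a set \<Rightarrow> 'k::field"
  assumes fin: "finite \<Delta>" and cl: "down_closed \<Delta>"
    and z: "chain (link \<Delta> {x}) j z" "bd (link \<Delta> {x}) z = (\<lambda>_. 0)"
    and b: "chain (induced \<Delta> (- {x})) (j + 1) b" "bd (induced \<Delta> (- {x})) b = z"
  obtains c where "chain \<Delta> (j + 1) c" "bd \<Delta> c = (\<lambda>_. 0)" "contract x c = z"
proof
  let ?D = "induced \<Delta> (- {x})"
  define c where "c = (\<lambda>G. if x \<in> G then vertex_sign x (G - {x}) * z (G - {x}) else - b G)"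
  have fin_faces: "\<forall>G\<in>\<Delta>. finite G" using finite_face[OF fin cl] by blast
  have zL: "z H \<noteq> 0 \<Longrightarrow> x \<notin> H \<and> insert x H \<in> \<Delta>" for H
    using z(1) by (auto simp: chain_def link_singleton)
  show contract_c: "contract x c = z"
  proof
    fix H show "contract x c H = z H"
      using zL[of H] vertex_sign_square[of x H]
      by (cases "x \<in> H") (auto simp: contract_def c_def mult.assoc[symmetric])
  qed
  show "chain \<Delta> (j + 1) c"
    unfolding chain_def
  proof (intro allI impI)
    fix G assume cG: "c G \<noteq> 0"
    show "G \<in> \<Delta> \<and> int (card G) = j + 1 + 1"
    proof (cases "x \<in> G")
      case True
      then have "z (G - {x}) \<noteq> 0" using cG by (simp add: c_def)
      then have "insert x (G - {x}) \<in> \<Delta>" "int (card (G - {x})) = j + 1"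
        using zL[of "G - {x}"] z(1) unfolding chain_def by blast+
      then have "G \<in> \<Delta>" "int (card (G - {x})) = j + 1"
        using True by (simp_all add: insert_absorb)
      moreover have "card G = Suc (card (G - {x}))"
        using calculation(1) fin_faces True by (meson card.remove)
      ultimately show ?thesis by simp
    next
      case False
      then have "b G \<noteq> 0" using cG by (simp add: c_def)
      then show ?thesis using b(1) by (auto simp: chain_def induced_def)
    qed
  qed
  show "bd \<Delta> c = (\<lambda>_. 0)"
  proof
    fix G show "bd \<Delta> c G = 0"
    proof (cases "x \<in> G")
      case True
      then have xH: "x \<notin> G - {x}" and G: "G = insert x (G - {x})" by auto
      have "vertex_sign x (G - {x}) * bd \<Delta> c G = contract x (bd \<Delta> c) (G - {x})"
        using xH G by (simp add: contract_def)
      also have "\<dots> = 0" using contract_bd[OF fin_faces xH, of c] contract_c z(2) by simp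
      finally show ?thesis by (simp add: vertex_sign_nonzero)
    next
      case False
      have "bd ?D c G = - bd ?D b G"
        unfolding bd_def by (auto simp: c_def induced_def sum_negf intro!: sum.cong)
      moreover have "(if insert x G \<in> \<Delta> then vertex_sign x G * c (insert x G) else 0) = z G"
        using False zL[of G] vertex_sign_square[of x G]
        by (auto simp: c_def mult.assoc[symmetric])
      ultimately show ?thesis
        using bd_split_vertex[OF finite_vertices[OF fin cl] False, of c] b(2) by simp
    qed
  qed
qed

lemma red_hom_nonzero_link_vertex:
  fixes K :: "'k::field itself" and \<Delta> :: "'a::linorder set set"
  assumes fin: "finite \<Delta>" and cl: "down_closed \<Delta>"
    and "red_hom_nonzero K (link \<Delta> {x}) j"
  shows "red_hom_nonzero K (induced \<Delta> (- {x})) j \<or> red_hom_nonzero K \<Delta> (j + 1)"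
proof -
  let ?L = "link \<Delta> {x}" and ?D = "induced \<Delta> (- {x})"
  obtain z :: "'a set \<Rightarrow> 'k" where z: "chain ?L j z" "bd ?L z = (\<lambda>_. 0)"
    and z_not_bd: "\<not> (\<exists>b. chain ?L (j + 1) b \<and> bd ?L b = z)"
    using assms(3) unfolding red_hom_nonzero_def by blast
  have LD: "?L \<subseteq> ?D" by (rule link_subset_deletion[OF cl])
  have "finite ?D" using fin by (simp add: induced_def)
  then have "finite (vertices ?D)" by (rule finite_vertices[OF _ down_closed_induced[OF cl]])
  then have bd_D: "bd ?D z = bd ?L z" using bd_subcomplex[OF z(1) LD] by blast
  show ?thesis
  proof (cases "\<exists>b. chain ?D (j + 1) b \<and> bd ?D b = z")
    case False
    moreover have "chain ?D j z" using z(1) LD by (auto simp: chain_def)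
    ultimately have "red_hom_nonzero K ?D j"
      unfolding red_hom_nonzero_def using z(2) bd_D by auto
    then show ?thesis ..
  next
    case True
    then obtain b where "chain ?D (j + 1) b" "bd ?D b = z" by blast
    then obtain c where c: "chain \<Delta> (j + 1) c" "bd \<Delta> c = (\<lambda>_. 0)" "contract x c = z"
      using cone_cycle[OF fin cl z] by blast
    have "\<not> (\<exists>e. chain \<Delta> (j + 1 + 1) e \<and> bd \<Delta> e = c)"
    proof
      assume "\<exists>e. chain \<Delta> (j + 1 + 1) e \<and> bd \<Delta> e = c"
      then obtain e where "chain \<Delta> (j + 1 + 1) e" "bd \<Delta> e = c" by blast
      moreover have "\<forall>G\<in>\<Delta>. finite G" using finite_face[OF fin cl] by blast
      ultimately have "chain ?L (j + 1) (\<lambda>H. - contract x e H)"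
        and "bd ?L (\<lambda>H. - contract x e H) = z"
        using chain_contract bd_link_contract c(3) by blast+
      then show False using z_not_bd by blast
    qed
    then have "red_hom_nonzero K \<Delta> (j + 1)"
      unfolding red_hom_nonzero_def using c(1,2) by blast
    then show ?thesis ..
  qed
qed

lemma card_in_Mset:
  assumes "W \<subseteq> vertices \<Delta>" "red_hom_nonzero K (induced \<Delta> W) (int (card W) - int i - 1)"
  shows "card W \<in> Mset K \<Delta> i"
  using assms unfolding Mset_def by blast

lemma Mset_link_vertex_dominated:
  fixes K :: "'k::field itself" and \<Delta> :: "'a::linorder set set"
  assumes fin: "finite \<Delta>" and cl: "down_closed \<Delta>" and m: "m \<in> Mset K (link \<Delta> {x}) i"
  shows "\<exists>m'\<in>Mset K \<Delta> i. m \<le> m'"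
proof -
  obtain W where mW: "m = card W" and W: "W \<subseteq> vertices (link \<Delta> {x})"
    and nz: "red_hom_nonzero K (induced (link \<Delta> {x}) W) (int (card W) - int i - 1)"
    using m unfolding Mset_def by blast
  have xW: "x \<notin> W" and WV: "W \<subseteq> vertices \<Delta>"
    using W by (auto simp: link_singleton vertices_def)
  have finW: "finite W" using finite_subset[OF WV finite_vertices[OF fin cl]] .
  let ?D = "induced \<Delta> (insert x W)"
  have "finite ?D" using fin by (simp add: induced_def)
  then have "red_hom_nonzero K (induced ?D (- {x})) (int (card W) - int i - 1)
      \<or> red_hom_nonzero K ?D (int (card W) - int i - 1 + 1)"
    using red_hom_nonzero_link_vertex[OF _ down_closed_induced[OF cl]] nz
    unfolding induced_link_singleton[OF xW] by blast
  then show ?thesis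
  proof
    assume "red_hom_nonzero K (induced ?D (- {x})) (int (card W) - int i - 1)"
    then have "card W \<in> Mset K \<Delta> i"
      unfolding induced_deletion[OF xW] by (rule card_in_Mset[OF WV])
    then show ?thesis using mW by blast
  next
    assume h: "red_hom_nonzero K ?D (int (card W) - int i - 1 + 1)"
    have "x \<in> vertices \<Delta>"
      using red_hom_nonzero_nonempty[OF nz] by (auto simp: induced_def link_singleton vertices_def)
    then have "insert x W \<subseteq> vertices \<Delta>" using WV by blast
    moreover have "int (card (insert x W)) - int i - 1 = int (card W) - int i - 1 + 1"
      using finW xW by simp
    then have "red_hom_nonzero K ?D (int (card (insert x W)) - int i - 1)"
      using h by (simp only:)
    ultimately have "card (insert x W) \<in> Mset K \<Delta> i"
      by (rule card_in_Mset)
    moreover have "m \<le> card (insert x W)" using finW xW mW by simp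
    ultimately show ?thesis by blast
  qed
qed

lemma Mset_link_dominated:
  fixes K :: "'k::field itself" and \<Gamma> :: "'a::linorder set set"
  assumes "finite F" "finite \<Gamma>" "down_closed \<Gamma>" "m \<in> Mset K (link \<Gamma> F) i"
  shows "\<exists>m'\<in>Mset K \<Gamma> i. m \<le> m'"
  using assms(1,4)
proof (induction F arbitrary: m rule: finite_induct)
  case empty
  then have "m \<in> Mset K \<Gamma> i" by (simp only: link_empty)
  then show ?case by blast
next
  case (insert x F)
  have "m \<in> Mset K (link (link \<Gamma> F) {x}) i"
    using insert.prems by (simp only: link_insert[OF insert.hyps(2)])
  then obtain m' where "m' \<in> Mset K (link \<Gamma> F) i" "m \<le> m'"
    using Mset_link_vertex_dominated[OF finite_link[OF assms(2)] down_closed_link[OF assms(3)]]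
    by blast
  moreover obtain m'' where "m'' \<in> Mset K \<Gamma> i" "m' \<le> m''"
    using insert.IH calculation(1) by blast
  ultimately show ?case using le_trans by blast
qed

lemma finite_Mset: "finite (vertices \<Delta>) \<Longrightarrow> finite (Mset K \<Delta> i)"
  by (rule finite_subset[of _ "card ` Pow (vertices \<Delta>)"]) (auto simp: Mset_def)

text \<open>Only the hypotheses that \<open>\<Gamma>\<close> is a simplicial complex, F is a face and
  \<open>M_i(lk F)\<close> is defined are used.\<close>
theorem lemma4p1:
  fixes K :: "'k::field itself"
    and \<Gamma> :: "'a::linorder set set"
    and F :: "'a set"
    and d n n' i :: nat and d' :: int
  assumes "simplicial_complex \<Gamma>"
    and "dim \<Gamma> = int d - 1"
    and "card (vertices \<Gamma>) = n"
    and "F \<in> \<Gamma>"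
    and "dim (link \<Gamma> F) = d'"
    and "card (vertices (link \<Gamma> F)) = n'"
    and "1 \<le> i" and "int i \<le> int n' - d'"
    and "Mset K (link \<Gamma> F) i \<noteq> {}"
  shows "Mset K \<Gamma> i \<noteq> {} \<and> M K (link \<Gamma> F) i \<le> M K \<Gamma> i"
proof -
  have fin: "finite \<Gamma>" and cl: "down_closed \<Gamma>"
    using assms(1) unfolding simplicial_complex_def down_closed_def by auto
  have "finite (Mset K (link \<Gamma> F) i)"
    by (rule finite_Mset[OF finite_vertices[OF finite_link[OF fin] down_closed_link[OF cl]]])
  then have "M K (link \<Gamma> F) i \<in> Mset K (link \<Gamma> F) i"
    unfolding M_def using assms(9) by (rule Max_in)
  then obtain m' where m': "m' \<in> Mset K \<Gamma> i" "M K (link \<Gamma> F) i \<le> m'"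
    using Mset_link_dominated[OF finite_face[OF fin cl assms(4)] fin cl] by blast
  moreover have "m' \<le> M K \<Gamma> i"
    unfolding M_def by (rule Max_ge[OF finite_Mset[OF finite_vertices[OF fin cl]] m'(1)])
  ultimately show ?thesis by auto
qed

end
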